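(* Let $n$ be a positive integer and let $u$ denote the unique positive real root of $$x^{2n+1} + x^{2n} + \cdots + x^{n} - x^{n-1} - x^{n-2} - \cdots - x - 1 = 0$$ (so $u\in(0,1)$). Then $$2\,\mathrm{Li}_2\!\left(u^{n+2}\right) - 2\,\mathrm{Li}_2\!\left(u^{n}\right) - \mathrm{Li}_2\!\left(u^2\right) - n^2 \log^2(u) = -\zeta(2).$$
   Context: $\mathrm{Li}_2(z)=\sum_{k\ge1} z^k/k^2$ for $|z|\le 1$ is the dilogarithm, $\log$ is the real natural logarithm, and $\zeta(2)=\pi^2/6$. *)

theory Defs
  imports "HOL-Analysis.Analysis"
begin

definition Li2 :: "real \<Rightarrow> real" where
  "Li2 z = (\<Sum>k. z ^ Suc k / (real (Suc k))\<^sup>2)"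

end

theory Submission
  imports Defs
begin

text \<open>With \<open>x = u\<^sup>n\<close>, multiplying the defining equation by \<open>1 - u\<close> gives
  \<open>x\<^sup>2 u\<^sup>2 = 2x - 1\<close>, so \<open>u\<^sup>n\<^sup>+\<^sup>2 = 2 - 1/x\<close> and \<open>u\<^sup>2 = (2x - 1)/x\<^sup>2\<close> with \<open>1/2 < x < 1\<close>.
  The theorem thus becomes the one-variable identity
  \<open>2 Li\<^sub>2(2 - 1/x) - 2 Li\<^sub>2(x) - Li\<^sub>2((2x - 1)/x\<^sup>2) - log\<^sup>2 x = -\<zeta>(2)\<close> on \<open>(1/2, 1]\<close>.
  Using \<open>Li\<^sub>2'(z) = -log(1 - z)/z\<close> and \<open>1 - (2 - 1/x) = (1 - x)/x\<close>,
  \<open>1 - (2x - 1)/x\<^sup>2 = ((1 - x)/x)\<^sup>2\<close>, the derivative of the left-hand side vanishes,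
  and at \<open>x = 1\<close> it equals \<open>-Li\<^sub>2(1) = -\<zeta>(2)\<close>.\<close>

lemma Li2_term_bound:
  fixes z :: real
  assumes "\<bar>z\<bar> \<le> 1"
  shows "norm (z ^ Suc k / (real (Suc k))\<^sup>2) \<le> 1 / (1 + real k)\<^sup>2"
proof -
  have "\<bar>z\<bar> ^ Suc k \<le> 1"
    using assms by (intro power_le_one) auto
  then show ?thesis
    by (simp add: power_abs abs_mult divide_right_mono)
qed

lemma summable_inverse_squares: "summable (\<lambda>k. 1 / (1 + real k)\<^sup>2)"
  using inverse_squares_sums by (simp add: sums_summable)

lemma summable_Li2:
  fixes z :: real
  assumes "\<bar>z\<bar> \<le> 1"
  shows "summable (\<lambda>k. z ^ Suc k / (real (Suc k))\<^sup>2)"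
  using summable_inverse_squares by (rule summable_comparison_test[rotated]) (use Li2_term_bound[OF assms] in blast)

lemma Li2_one: "Li2 1 = pi\<^sup>2 / 6"
  using inverse_squares_sums by (simp add: Li2_def sums_iff)

lemma continuous_on_Li2: "continuous_on {-1..1} Li2"
proof -
  have ul: "uniform_limit {-1..1} (\<lambda>n z. \<Sum>k<n. z ^ Suc k / (real (Suc k))\<^sup>2) Li2 sequentially"
    unfolding Li2_def[abs_def]
    by (rule Weierstrass_m_test[OF _ summable_inverse_squares]) (rule Li2_term_bound, auto)
  show ?thesis
    by (rule uniform_limit_theorem[OF always_eventually ul]) (auto intro!: continuous_intros)
qed

text \<open>As a power series \<open>Li\<^sub>2 z = (\<Sum>n. z\<^sup>n / n\<^sup>2)\<close>: the junk value \<open>1 / 0 = 0\<close> makes the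
  constant term vanish, so termwise differentiation applies without a case split.\<close>

lemma Li2_power_series:
  fixes z :: real
  assumes "\<bar>z\<bar> \<le> 1"
  shows "(\<lambda>n. 1 / (real n)\<^sup>2 * z ^ n) sums Li2 z"
proof -
  have "(\<lambda>n. 1 / (real (Suc n))\<^sup>2 * z ^ Suc n) sums Li2 z"
    unfolding Li2_def using summable_sums[OF summable_Li2[OF assms]] by simp
  then have "(\<lambda>n. 1 / (real n)\<^sup>2 * z ^ n) sums (Li2 z + 1 / (real 0)\<^sup>2 * z ^ 0)"
    by (rule sums_Suc_iff[THEN iffD1])
  then show ?thesis
    by simp
qed

lemma Li2_has_real_derivative:
  fixes z :: real
  assumes "\<bar>z\<bar> < 1" "z \<noteq> 0"
  shows "(Li2 has_real_derivative - ln (1 - z) / z) (at z)"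
proof -
  let ?c = "\<lambda>n. 1 / (real n)\<^sup>2"
  have "summable (\<lambda>n. ?c n * y ^ n)" if "norm y < 1" for y :: real
    using that by (intro sums_summable[OF Li2_power_series]) simp
  moreover have "norm z < 1"
    using assms by simp
  ultimately have D: "((\<lambda>y. \<Sum>n. ?c n * y ^ n) has_real_derivative (\<Sum>n. diffs ?c n * z ^ n)) (at z)"
    by (rule termdiffs_strong')
  have "\<forall>\<^sub>F y in nhds z. y \<in> {-1<..<1}"
    using assms by (intro eventually_nhds_in_open) auto
  then have "\<forall>\<^sub>F y in nhds z. Li2 y = (\<Sum>n. ?c n * y ^ n)"
    by eventually_elim (rule sums_unique, rule Li2_power_series, auto)
  from DERIV_cong_ev[OF refl this refl] D
  have "(Li2 has_real_derivative (\<Sum>n. diffs ?c n * z ^ n)) (at z)"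
    by simp
  moreover have "(\<lambda>n. diffs ?c n * z ^ n) sums (- ln (1 - z) / z)"
  proof -
    have "(\<lambda>n. z ^ n / real n) sums - ln (1 - z)"
      using sums_minus[OF ln_series'[of "-z"]] assms by simp
    then have "(\<lambda>n. z ^ Suc n / real (Suc n)) sums - ln (1 - z)"
      by (subst sums_Suc_iff) simp
    then have "(\<lambda>n. z ^ Suc n / real (Suc n) / z) sums (- ln (1 - z) / z)"
      by (rule sums_divide)
    then show ?thesis
      using assms by (simp add: diffs_def power2_eq_square)
  qed
  ultimately show ?thesis
    by (simp add: sums_unique[symmetric])
qed

lemma Li2_two_minus_inverse_has_real_derivative:
  fixes y :: real
  assumes "1/2 < y" "y < 1"
  shows "((\<lambda>y. Li2 (2 - 1/y)) has_real_derivative - ln ((1 - y) / y) / (y * (2*y - 1))) (at y)"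
proof -
  have "y \<noteq> 0" "2*y - 1 \<noteq> 0" "\<bar>2 - 1/y\<bar> < 1" "2 - 1/y \<noteq> 0"
    using assms by (auto simp: divide_simps)
  have "((\<lambda>y. Li2 (2 - 1/y)) has_real_derivative - ln (1 - (2 - 1/y)) / (2 - 1/y) * (1 / y\<^sup>2)) (at y)"
    using Li2_has_real_derivative[OF \<open>\<bar>2 - 1/y\<bar> < 1\<close> \<open>2 - 1/y \<noteq> 0\<close>]
    by (rule DERIV_chain2) (use \<open>y \<noteq> 0\<close> in \<open>auto intro!: derivative_eq_intros simp: power2_eq_square\<close>)
  also have "1 - (2 - 1/y) = (1 - y) / y"
    using \<open>y \<noteq> 0\<close> by (simp add: field_simps)
  also have "- ln ((1 - y) / y) / (2 - 1/y) * (1 / y\<^sup>2) = - ln ((1 - y) / y) / (y * (2*y - 1))"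
    using \<open>y \<noteq> 0\<close> \<open>2*y - 1 \<noteq> 0\<close> by (simp add: field_simps power2_eq_square)
  finally show ?thesis .
qed

lemma Li2_quadratic_has_real_derivative:
  fixes y :: real
  assumes "1/2 < y" "y < 1"
  shows "((\<lambda>y. Li2 ((2*y - 1) / y\<^sup>2)) has_real_derivative
           - 4 * (1 - y) * ln ((1 - y) / y) / (y * (2*y - 1))) (at y)"
proof -
  have "y \<noteq> 0" "2*y - 1 \<noteq> 0"
    using assms by auto
  have "1 - (2*y - 1) / y\<^sup>2 = ((1 - y) / y)\<^sup>2"
    using \<open>y \<noteq> 0\<close> by (simp add: field_simps power2_eq_square)
  moreover have "0 < (1 - y) / y"
    using assms by simp
  ultimately have "0 < 1 - (2*y - 1) / y\<^sup>2" "(2*y - 1) / y\<^sup>2 > 0"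
    using assms by auto
  then have "\<bar>(2*y - 1) / y\<^sup>2\<bar> < 1" "(2*y - 1) / y\<^sup>2 \<noteq> 0"
    by auto
  from Li2_has_real_derivative[OF this]
  have "((\<lambda>y. Li2 ((2*y - 1) / y\<^sup>2)) has_real_derivative
          - ln (1 - (2*y - 1) / y\<^sup>2) / ((2*y - 1) / y\<^sup>2) * (2 * (1 - y) / y ^ 3)) (at y)"
    by (rule DERIV_chain2)
      (use \<open>y \<noteq> 0\<close> in \<open>auto intro!: derivative_eq_intros simp: field_simps power2_eq_square power3_eq_cube\<close>)
  also have "ln (1 - (2*y - 1) / y\<^sup>2) = 2 * ln ((1 - y) / y)"
    using \<open>1 - (2*y - 1) / y\<^sup>2 = ((1 - y) / y)\<^sup>2\<close> \<open>0 < (1 - y) / y\<close> by (simp add: ln_realpow)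
  also have "- (2 * ln ((1 - y) / y)) / ((2*y - 1) / y\<^sup>2) * (2 * (1 - y) / y ^ 3)
      = - 4 * (1 - y) * ln ((1 - y) / y) / (y * (2*y - 1))"
    using \<open>y \<noteq> 0\<close> \<open>2*y - 1 \<noteq> 0\<close> by (simp add: field_simps power2_eq_square power3_eq_cube)
  finally show ?thesis .
qed

lemma Li2_arguments_in_unit_interval:
  fixes y :: real
  assumes "1/2 < y" "y \<le> 1"
  shows "2 - 1/y \<in> {-1..1}" "(2*y - 1) / y\<^sup>2 \<in> {-1..1}"
proof -
  show "2 - 1/y \<in> {-1..1}"
    using assms by (auto simp: divide_simps)
  have "2*y - 1 \<le> y\<^sup>2"
    using zero_le_power2[of "y - 1"] by (simp add: power2_eq_square algebra_simps)
  then show "(2*y - 1) / y\<^sup>2 \<in> {-1..1}"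
    using assms by (auto simp: divide_simps)
qed

lemma Li2_functional_equation:
  fixes x :: real
  assumes "1/2 < x" "x \<le> 1"
  shows "2 * Li2 (2 - 1/x) - 2 * Li2 x - Li2 ((2*x - 1) / x\<^sup>2) - (ln x)\<^sup>2 = - (pi\<^sup>2 / 6)"
proof -
  define F where "F y = 2 * Li2 (2 - 1/y) - 2 * Li2 y - Li2 ((2*y - 1) / y\<^sup>2) - (ln y)\<^sup>2" for y :: real
  have "F x = F 1"
  proof (cases "x = 1")
    case False
    with assms have "x < 1" by simp
    moreover have "continuous_on {x..1} F"
    proof -
      have "continuous_on {x..1} (\<lambda>y. 2 - 1/y)" "continuous_on {x..1} (\<lambda>y. (2*y - 1) / y\<^sup>2)"
        using assms by (auto intro!: continuous_intros)
      moreover have "(\<lambda>y. 2 - 1/y) ` {x..1} \<subseteq> {-1..1}" "(\<lambda>y. (2*y - 1) / y\<^sup>2) ` {x..1} \<subseteq> {-1..1}"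
        using Li2_arguments_in_unit_interval assms by auto
      ultimately have "continuous_on {x..1} (\<lambda>y. Li2 (2 - 1/y))"
        "continuous_on {x..1} (\<lambda>y. Li2 ((2*y - 1) / y\<^sup>2))"
        by (auto intro: continuous_on_compose2[OF continuous_on_Li2])
      moreover have "continuous_on {x..1} Li2"
        using assms by (auto intro: continuous_on_subset[OF continuous_on_Li2])
      ultimately show ?thesis
        unfolding F_def[abs_def] using assms by (auto intro!: continuous_intros)
    qed
    moreover have "(F has_real_derivative 0) (at y)" if "x < y" "y < 1" for y
    proof -
      have y: "1/2 < y" "y < 1"
        using assms that by auto
      then have "y \<noteq> 0" "2*y - 1 \<noteq> 0"
        by auto
      define L where "L = ln ((1 - y) / y)"
      have "ln (1 - y) = L + ln y"
        using y by (simp add: L_def ln_div)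
      have "(F has_real_derivative 2 * (- L / (y * (2*y - 1))) - 2 * (- ln (1 - y) / y)
              - (- 4 * (1 - y) * L / (y * (2*y - 1))) - 2 * ln y / y) (at y)"
        unfolding F_def[abs_def] L_def using y
        by (intro DERIV_diff DERIV_cmult Li2_two_minus_inverse_has_real_derivative
            Li2_quadratic_has_real_derivative Li2_has_real_derivative)
          (auto intro!: derivative_eq_intros)
      also have "2 * (- L / (y * (2*y - 1))) - 2 * (- ln (1 - y) / y)
              - (- 4 * (1 - y) * L / (y * (2*y - 1))) - 2 * ln y / y = 0"
        unfolding \<open>ln (1 - y) = L + ln y\<close> using \<open>y \<noteq> 0\<close> \<open>2*y - 1 \<noteq> 0\<close>
        by (simp add: divide_simps) (simp add: algebra_simps)
      finally show ?thesis .
    qed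
    ultimately show ?thesis
      by (intro DERIV_isconst_end[symmetric]) auto
  qed simp
  also have "F 1 = - (pi\<^sup>2 / 6)"
    by (simp add: F_def Li2_one)
  finally show ?thesis
    by (simp add: F_def)
qed

lemma root_polynomial_times_one_minus:
  fixes u :: "'a::comm_ring_1"
  shows "(1 - u) * ((\<Sum>k=n..2*n+1. u ^ k) - (\<Sum>k<n. u ^ k)) = 2 * u ^ n - 1 - (u ^ n)\<^sup>2 * u\<^sup>2"
proof -
  have geometric_tail: "(1 - u) * (\<Sum>k=n..2*n+1. u ^ k) = u ^ n - u ^ Suc (2*n + 1)"
    by (rule sum_gp_multiplied) simp
  have geometric_head: "(1 - u) * (\<Sum>k<n. u ^ k) = 1 - u ^ n"
    by (rule one_diff_power_eq[symmetric])
  have top_power: "u ^ Suc (2*n + 1) = (u ^ n)\<^sup>2 * u\<^sup>2"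
    by (simp add: power_add power2_eq_square mult_ac flip: power_add mult_2)
  show ?thesis
    unfolding right_diff_distrib geometric_tail geometric_head top_power
    by (simp add: algebra_simps)
qed

lemma root_power_properties:
  fixes n :: nat and u :: real
  assumes "n \<ge> 1" "u > 0"
    and root: "(\<Sum>k=n..2*n+1. u ^ k) - (\<Sum>k<n. u ^ k) = 0"
  shows "1/2 < u ^ n" "u ^ n < 1" "(u ^ n)\<^sup>2 * u\<^sup>2 = 2 * u ^ n - 1"
proof -
  show eq: "(u ^ n)\<^sup>2 * u\<^sup>2 = 2 * u ^ n - 1"
    using root_polynomial_times_one_minus[of u n] root by simp
  have "u \<noteq> 1"
    using root by auto
  have "u < 1"
  proof (rule ccontr)
    assume "\<not> u < 1"
    with \<open>u \<noteq> 1\<close> have "(u ^ n)\<^sup>2 * 1 < (u ^ n)\<^sup>2 * u\<^sup>2"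
      using \<open>u > 0\<close> by (intro mult_strict_left_mono) auto
    with eq have "(u ^ n - 1)\<^sup>2 < 0"
      by (simp add: power2_eq_square algebra_simps)
    then show False
      by simp
  qed
  then show "u ^ n < 1"
    using assms by (simp add: power_less_one_iff)
  have "0 < (u ^ n)\<^sup>2 * u\<^sup>2"
    using \<open>u > 0\<close> by simp
  with eq show "1/2 < u ^ n"
    by simp
qed

theorem theorem3p2:
  fixes n :: nat and u :: real
  assumes "n \<ge> 1"
    and "u > 0"
    and "(\<Sum>k=n..2*n+1. u ^ k) - (\<Sum>k<n. u ^ k) = 0"
  shows "2 * Li2 (u ^ (n + 2)) - 2 * Li2 (u ^ n) - Li2 (u ^ 2) - (real n)\<^sup>2 * (ln u)\<^sup>2
           = - (pi\<^sup>2 / 6)"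
proof -
  define x where "x = u ^ n"
  have x: "1/2 < x" "x < 1" "x\<^sup>2 * u\<^sup>2 = 2 * x - 1"
    using root_power_properties[OF assms] by (simp_all add: x_def)
  then have "x > 0"
    by simp
  have "u ^ (n + 2) = x * u\<^sup>2"
    by (simp add: x_def power_add power2_eq_square)
  also have "\<dots> = 2 - 1/x"
    using x \<open>x > 0\<close> by (simp add: field_simps power2_eq_square)
  finally have top: "u ^ (n + 2) = 2 - 1/x" .
  have square: "u\<^sup>2 = (2*x - 1) / x\<^sup>2"
    using x by (simp add: field_simps)
  have log: "(real n)\<^sup>2 * (ln u)\<^sup>2 = (ln x)\<^sup>2"
    using assms(2) by (simp add: x_def ln_realpow power_mult_distrib)
  show ?thesis
    unfolding top square log x_def[symmetric]
    using x by (intro Li2_functional_equation) auto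
qed

end
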